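(* With the notation of the context, the semigroup $U$ is generated by elements $u\in U$ satisfying $\varphi_u(e)\le 2$ for all $e\in E$. Consequently, under the isomorphism $k[\mathrm{Rep}_{Q,c}(\beta,r)]^{\mathrm{SL}(\beta)}\cong k[U][y_b]_{b\in B}$, the ring of semi-invariants is generated by the monomials corresponding to such $u$ together with the variables $y_b$ (i.e. generators occur in multidegrees with $\varphi_u(e)\le 2$ for all endpoints $e$ and with each band variable of degree at most $1$).
   Context: $k$ algebraically closed; $Q$ acyclic quiver with coloring $c:Q_1\to S$ (each $c^{-1}(s)$ the arrow set of a directed path) such that $kQ/I_c$ is a gentle string algebra ($I_c$ generated by all $ba$ with $ha=tb$, $c(a)=c(b)$). $\beta$ a dimension vector; $\mathfrak{X}$ the set of $(x,s)\in Q_0\times S$ such that an arrow of color $s$ has head or tail $x$; $i(x,s)$, $o(x,s)$ the arrow of color $s$ with head, resp. tail, $x$ (or $\emptyset$). A vertex is lonely if it lies in exactly one pair of $\mathfrak{X}$, coupled if in two. $r$ is a maximal rank sequence: $r:Q_1\to\mathbb{N}$, $r(i(x,s))+r(o(x,s))\le\beta_x$ for all $(x,s)\in\mathfrak{X}$ ($r(\emptyset)=0$), maximal coordinatewise. $\mathrm{Rep}_{Q,c}(\beta,r)$: representations of $kQ/I_c$ of dimension $\beta$ with $\operatorname{rank}V_a\le r(a)$. Partition equivalence graph: vertex set $\Sigma=\{\alpha_i^{(x,s)}:(x,s)\in\mathfrak{X},1\le i\le\beta_x-1\}$, edges (i) $\alpha_i^{(x,s_1)}$—$\alpha_{\beta_x-i}^{(x,s_2)}$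 for coupled $x$ with pairs $(x,s_1),(x,s_2)$, $1\le i\le\beta_x-1$; (ii) $\alpha_i^{(x,s)}$—$\alpha_{\beta_y-i}^{(y,s)}$ for each arrow $a:x\to y$ of color $s$, $1\le i\le r(a)-1$. Path components with at least one edge are strings, cycle components are bands ($B$ = set of bands); $E$ is the set of string endpoints and $\Theta:E\to E$ swaps the endpoints of each string. For $u:Q_1\to\mathbb{N}$ ($u(\emptyset)=0$), $\varphi_u(\alpha_i^{(x,s)})=0$ if $x$ lonely, and $=[i=r(o(x,s))]u(o(x,s))+[i=\beta_x-r(i(x,s))]u(i(x,s))$ if $x$ coupled. $U=\{u:Q_1\to\mathbb{N}:\varphi_u(e)=\varphi_u(\Theta e)\ \forall e\in E\}$. The paper proves $k[\mathrm{Rep}_{Q,c}(\beta,r)]^{\mathrm{SL}(\beta)}\cong k[U][y_b]_{b\in B}$ (polynomial ring in one variable per band over $k[U]$). *)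

theory Defs
  imports Main
begin

definition colored_quiver ::
  "'v set \<Rightarrow> 'a set \<Rightarrow> ('a \<Rightarrow> 'v) \<Rightarrow> ('a \<Rightarrow> 'v) \<Rightarrow> ('a \<Rightarrow> 's) \<Rightarrow> bool" where
  "colored_quiver Q0 Q1 tail head c \<longleftrightarrow>
     finite Q0 \<and> finite Q1 \<and>
     (\<forall>a\<in>Q1. tail a \<in> Q0 \<and> head a \<in> Q0) \<and>
     acyclic {(tail a, head a) | a. a \<in> Q1} \<and>
     (\<forall>s \<in> c ` Q1. \<exists>p. p \<noteq> [] \<and> set p = {a \<in> Q1. c a = s} \<and>
        (\<forall>j. Suc j < length p \<longrightarrow> head (p ! j) = tail (p ! Suc j)))"

text \<open>kQ/I_c is gentle, where I_c is generated by the paths ba (head a = tail b)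
  with c a = c b; so for composable a, b: ba \<in> I_c iff c a = c b.\<close>

definition gentle_coloring ::
  "'v set \<Rightarrow> 'a set \<Rightarrow> ('a \<Rightarrow> 'v) \<Rightarrow> ('a \<Rightarrow> 'v) \<Rightarrow> ('a \<Rightarrow> 's) \<Rightarrow> bool" where
  "gentle_coloring Q0 Q1 tail head c \<longleftrightarrow>
     (\<forall>x\<in>Q0. card {a\<in>Q1. head a = x} \<le> 2 \<and> card {a\<in>Q1. tail a = x} \<le> 2) \<and>
     (\<forall>b\<in>Q1. card {a\<in>Q1. head a = tail b \<and> c a = c b} \<le> 1 \<and>
              card {a\<in>Q1. head a = tail b \<and> c a \<noteq> c b} \<le> 1) \<and>
     (\<forall>a\<in>Q1. card {b\<in>Q1. tail b = head a \<and> c b = c a} \<le> 1 \<and>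
              card {b\<in>Q1. tail b = head a \<and> c b \<noteq> c a} \<le> 1)"

definition gentle_colored_quiver ::
  "'v set \<Rightarrow> 'a set \<Rightarrow> ('a \<Rightarrow> 'v) \<Rightarrow> ('a \<Rightarrow> 'v) \<Rightarrow> ('a \<Rightarrow> 's) \<Rightarrow> bool" where
  "gentle_colored_quiver Q0 Q1 tail head c \<longleftrightarrow>
     colored_quiver Q0 Q1 tail head c \<and> gentle_coloring Q0 Q1 tail head c"

definition Xset ::
  "'v set \<Rightarrow> 'a set \<Rightarrow> ('a \<Rightarrow> 'v) \<Rightarrow> ('a \<Rightarrow> 'v) \<Rightarrow> ('a \<Rightarrow> 's) \<Rightarrow> ('v \<times> 's) set" where
  "Xset Q0 Q1 tail head c =
     {(x, s). x \<in> Q0 \<and> (\<exists>a\<in>Q1. c a = s \<and> (head a = x \<or> tail a = x))}"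

text \<open>i(x,s): arrow of color s with head x; o(x,s): arrow of color s with tail x
  (None plays the role of the empty arrow).\<close>

definition in_arr :: "'a set \<Rightarrow> ('a \<Rightarrow> 'v) \<Rightarrow> ('a \<Rightarrow> 's) \<Rightarrow> 'v \<Rightarrow> 's \<Rightarrow> 'a option" where
  "in_arr Q1 head c x s =
     (if \<exists>a\<in>Q1. c a = s \<and> head a = x then Some (SOME a. a \<in> Q1 \<and> c a = s \<and> head a = x)
      else None)"

definition out_arr :: "'a set \<Rightarrow> ('a \<Rightarrow> 'v) \<Rightarrow> ('a \<Rightarrow> 's) \<Rightarrow> 'v \<Rightarrow> 's \<Rightarrow> 'a option" where
  "out_arr Q1 tail c x s =
     (if \<exists>a\<in>Q1. c a = s \<and> tail a = x then Some (SOME a. a \<in> Q1 \<and> c a = s \<and> tail a = x)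
      else None)"

definition optval :: "('a \<Rightarrow> nat) \<Rightarrow> 'a option \<Rightarrow> nat" where
  "optval f o' = (case o' of None \<Rightarrow> 0 | Some a \<Rightarrow> f a)"

definition lonely ::
  "'v set \<Rightarrow> 'a set \<Rightarrow> ('a \<Rightarrow> 'v) \<Rightarrow> ('a \<Rightarrow> 'v) \<Rightarrow> ('a \<Rightarrow> 's) \<Rightarrow> 'v \<Rightarrow> bool" where
  "lonely Q0 Q1 tail head c x \<longleftrightarrow> card {s. (x, s) \<in> Xset Q0 Q1 tail head c} = 1"

definition coupled ::
  "'v set \<Rightarrow> 'a set \<Rightarrow> ('a \<Rightarrow> 'v) \<Rightarrow> ('a \<Rightarrow> 'v) \<Rightarrow> ('a \<Rightarrow> 's) \<Rightarrow> 'v \<Rightarrow> bool" where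
  "coupled Q0 Q1 tail head c x \<longleftrightarrow> card {s. (x, s) \<in> Xset Q0 Q1 tail head c} = 2"

definition rank_ok ::
  "'v set \<Rightarrow> 'a set \<Rightarrow> ('a \<Rightarrow> 'v) \<Rightarrow> ('a \<Rightarrow> 'v) \<Rightarrow> ('a \<Rightarrow> 's) \<Rightarrow> ('v \<Rightarrow> nat)
    \<Rightarrow> ('a \<Rightarrow> nat) \<Rightarrow> bool" where
  "rank_ok Q0 Q1 tail head c \<beta> r \<longleftrightarrow>
     (\<forall>(x, s) \<in> Xset Q0 Q1 tail head c.
        optval r (in_arr Q1 head c x s) + optval r (out_arr Q1 tail c x s) \<le> \<beta> x)"

definition max_rank_seq ::
  "'v set \<Rightarrow> 'a set \<Rightarrow> ('a \<Rightarrow> 'v) \<Rightarrow> ('a \<Rightarrow> 'v) \<Rightarrow> ('a \<Rightarrow> 's) \<Rightarrow> ('v \<Rightarrow> nat)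
    \<Rightarrow> ('a \<Rightarrow> nat) \<Rightarrow> bool" where
  "max_rank_seq Q0 Q1 tail head c \<beta> r \<longleftrightarrow>
     rank_ok Q0 Q1 tail head c \<beta> r \<and>
     \<not> (\<exists>r'. rank_ok Q0 Q1 tail head c \<beta> r' \<and> (\<forall>a\<in>Q1. r a \<le> r' a) \<and> (\<exists>a\<in>Q1. r a < r' a))"

text \<open>Vertex set Sigma of the partition equivalence graph; (x,s,i) stands for alpha_i^(x,s).\<close>
definition Sigma_pe ::
  "'v set \<Rightarrow> 'a set \<Rightarrow> ('a \<Rightarrow> 'v) \<Rightarrow> ('a \<Rightarrow> 'v) \<Rightarrow> ('a \<Rightarrow> 's) \<Rightarrow> ('v \<Rightarrow> nat)
    \<Rightarrow> ('v \<times> 's \<times> nat) set" where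
  "Sigma_pe Q0 Q1 tail head c \<beta> =
     {(x, s, i). (x, s) \<in> Xset Q0 Q1 tail head c \<and> 1 \<le> i \<and> i \<le> \<beta> x - 1}"

definition pe_adj ::
  "'v set \<Rightarrow> 'a set \<Rightarrow> ('a \<Rightarrow> 'v) \<Rightarrow> ('a \<Rightarrow> 'v) \<Rightarrow> ('a \<Rightarrow> 's) \<Rightarrow> ('v \<Rightarrow> nat)
    \<Rightarrow> ('a \<Rightarrow> nat) \<Rightarrow> ('v \<times> 's \<times> nat) \<Rightarrow> ('v \<times> 's \<times> nat) \<Rightarrow> bool" where
  "pe_adj Q0 Q1 tail head c \<beta> r v w \<longleftrightarrow>
     (\<exists>x s1 s2 i. coupled Q0 Q1 tail head c x \<and>
        (x, s1) \<in> Xset Q0 Q1 tail head c \<and> (x, s2) \<in> Xset Q0 Q1 tail head c \<and> s1 \<noteq> s2 \<and>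
        1 \<le> i \<and> i \<le> \<beta> x - 1 \<and> v = (x, s1, i) \<and> w = (x, s2, \<beta> x - i))
   \<or> (\<exists>a\<in>Q1. \<exists>i. 1 \<le> i \<and> i \<le> r a - 1 \<and>
        ((v = (tail a, c a, i) \<and> w = (head a, c a, \<beta> (head a) - i)) \<or>
         (w = (tail a, c a, i) \<and> v = (head a, c a, \<beta> (head a) - i))))"

text \<open>String endpoints: vertices of degree one (every vertex has degree at most two,
  components are paths and cycles; strings are the path components with an edge).\<close>
definition Ends ::
  "'v set \<Rightarrow> 'a set \<Rightarrow> ('a \<Rightarrow> 'v) \<Rightarrow> ('a \<Rightarrow> 'v) \<Rightarrow> ('a \<Rightarrow> 's) \<Rightarrow> ('v \<Rightarrow> nat)
    \<Rightarrow> ('a \<Rightarrow> nat) \<Rightarrow> ('v \<times> 's \<times> nat) set" where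
  "Ends Q0 Q1 tail head c \<beta> r =
     {v \<in> Sigma_pe Q0 Q1 tail head c \<beta>. card {w. pe_adj Q0 Q1 tail head c \<beta> r v w} = 1}"

definition pe_connected ::
  "'v set \<Rightarrow> 'a set \<Rightarrow> ('a \<Rightarrow> 'v) \<Rightarrow> ('a \<Rightarrow> 'v) \<Rightarrow> ('a \<Rightarrow> 's) \<Rightarrow> ('v \<Rightarrow> nat)
    \<Rightarrow> ('a \<Rightarrow> nat) \<Rightarrow> ('v \<times> 's \<times> nat) \<Rightarrow> ('v \<times> 's \<times> nat) \<Rightarrow> bool" where
  "pe_connected Q0 Q1 tail head c \<beta> r v w \<longleftrightarrow>
     (v, w) \<in> {(p, q). pe_adj Q0 Q1 tail head c \<beta> r p q}\<^sup>*"

definition Theta ::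
  "'v set \<Rightarrow> 'a set \<Rightarrow> ('a \<Rightarrow> 'v) \<Rightarrow> ('a \<Rightarrow> 'v) \<Rightarrow> ('a \<Rightarrow> 's) \<Rightarrow> ('v \<Rightarrow> nat)
    \<Rightarrow> ('a \<Rightarrow> nat) \<Rightarrow> ('v \<times> 's \<times> nat) \<Rightarrow> ('v \<times> 's \<times> nat)" where
  "Theta Q0 Q1 tail head c \<beta> r e =
     (THE e'. e' \<in> Ends Q0 Q1 tail head c \<beta> r \<and> e' \<noteq> e \<and> pe_connected Q0 Q1 tail head c \<beta> r e e')"

definition phi ::
  "'v set \<Rightarrow> 'a set \<Rightarrow> ('a \<Rightarrow> 'v) \<Rightarrow> ('a \<Rightarrow> 'v) \<Rightarrow> ('a \<Rightarrow> 's) \<Rightarrow> ('v \<Rightarrow> nat)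
    \<Rightarrow> ('a \<Rightarrow> nat) \<Rightarrow> ('a \<Rightarrow> nat) \<Rightarrow> ('v \<times> 's \<times> nat) \<Rightarrow> nat" where
  "phi Q0 Q1 tail head c \<beta> r u e =
     (case e of (x, s, i) \<Rightarrow>
       (if lonely Q0 Q1 tail head c x then 0
        else (if i = optval r (out_arr Q1 tail c x s) then optval u (out_arr Q1 tail c x s) else 0)
           + (if i = \<beta> x - optval r (in_arr Q1 head c x s) then optval u (in_arr Q1 head c x s) else 0)))"

definition Usg ::
  "'v set \<Rightarrow> 'a set \<Rightarrow> ('a \<Rightarrow> 'v) \<Rightarrow> ('a \<Rightarrow> 'v) \<Rightarrow> ('a \<Rightarrow> 's) \<Rightarrow> ('v \<Rightarrow> nat)
    \<Rightarrow> ('a \<Rightarrow> nat) \<Rightarrow> ('a \<Rightarrow> nat) set" where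
  "Usg Q0 Q1 tail head c \<beta> r =
     {u. (\<forall>a. a \<notin> Q1 \<longrightarrow> u a = 0) \<and>
         (\<forall>e \<in> Ends Q0 Q1 tail head c \<beta> r.
            phi Q0 Q1 tail head c \<beta> r u e = phi Q0 Q1 tail head c \<beta> r u (Theta Q0 Q1 tail head c \<beta> r e))}"

end

theory Submission
  imports Defs "HOL-Library.Multiset"
begin

text \<open>
  Write phi_u(e) as a degree: every arrow a has at most two "points" in the
  partition equivalence graph, tail_point a = (tail a, c a, r a) and
  head_point a = (head a, c a, beta(head a) - r a), and on a string endpoint e at a coupled
  vertex phi_u(e) counts the points equal to e, each arrow a taken u(a) times.  Hence u lies
  in U iff the multiset of arrows weighted by u is balanced with respect to the fixed-point
  free involution Theta on the endpoints (equal degree at e and Theta e).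

  Then a graph lemma shows that in a finite graph of maximal degree 2 every leaf
  has a unique other leaf in its component, which makes Theta an involution.  After
  identifying U with the balanced arrow multisets, any u in U with phi_u(e) >= 3 splits as a
  sum of two nonzero elements of U, and induction on the total weight yields the theorem.
\<close>

definition point_deg :: "('l \<times> 'p multiset) multiset \<Rightarrow> 'p \<Rightarrow> nat" where
  "point_deg G p = (\<Sum>x\<in>#G. count (snd x) p)"

lemma point_deg_empty [simp]: "point_deg {#} p = 0"
  by (simp add: point_deg_def)

lemma point_deg_add_mset [simp]: "point_deg (add_mset x G) p = count (snd x) p + point_deg G p"
  by (simp add: point_deg_def)

lemma point_deg_union [simp]: "point_deg (A + B) p = point_deg A p + point_deg B p"
  by (simp add: point_deg_def)

lemma point_deg_mono: "A \<subseteq># B \<Longrightarrow> point_deg A p \<le> point_deg B p"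
  by (metis point_deg_union le_add1 subset_mset.add_diff_inverse)

lemma point_deg_pos: "point_deg G p > 0 \<Longrightarrow> \<exists>x\<in>#G. p \<in># snd x"
  by (induct G) auto

lemma point_deg_sum: "point_deg (sum f A) p = (\<Sum>a\<in>A. point_deg (f a) p)"
  by (induct A rule: infinite_finite_induct) auto

lemma point_deg_replicate: "point_deg (replicate_mset n x) p = n * count (snd x) p"
  by (induct n) auto

lemma count_two_le_size: "a \<noteq> b \<Longrightarrow> count M a + count M b \<le> size M"
  by (induct M) auto

definition pairing_on :: "'p set \<Rightarrow> ('p \<Rightarrow> 'p) \<Rightarrow> bool" where
  "pairing_on P \<theta> \<longleftrightarrow> (\<forall>q\<in>P. \<theta> q \<in> P \<and> \<theta> q \<noteq> q \<and> \<theta> (\<theta> q) = q)"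

lemma pairing_onD:
  assumes "pairing_on P \<theta>" "q \<in> P"
  shows "\<theta> q \<in> P" "\<theta> q \<noteq> q" "\<theta> (\<theta> q) = q"
  using assms unfolding pairing_on_def by auto

definition balanced :: "'p set \<Rightarrow> ('p \<Rightarrow> 'p) \<Rightarrow> ('l \<times> 'p multiset) multiset \<Rightarrow> bool" where
  "balanced P \<theta> G \<longleftrightarrow> (\<forall>q\<in>P. point_deg G q = point_deg G (\<theta> q))"

lemma balanced_shift:
  assumes pairing: "pairing_on P \<theta>" and p: "p \<in> P"
    and deg: "\<And>q. point_deg A q = point_deg B q + (if q = p then 1 else 0) + (if q = \<theta> p then 1 else 0)"
  shows "balanced P \<theta> A \<longleftrightarrow> balanced P \<theta> B"
proof -
  have "q = p \<longleftrightarrow> \<theta> q = \<theta> p" "q = \<theta> p \<longleftrightarrow> \<theta> q = p" if "q \<in> P" for q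
    using pairing p that unfolding pairing_on_def by metis+
  then show ?thesis
    unfolding balanced_def deg by auto
qed

lemma pair_item_balanced:
  fixes x :: "'l \<times> 'p multiset"
  assumes pairing: "pairing_on P \<theta>" and p: "p \<in> P"
    and both: "p \<in># snd x" "\<theta> p \<in># snd x" and small: "size (snd x) \<le> 2"
  shows "snd x = {#p, \<theta> p#}" and "balanced P \<theta> {#x#}"
proof -
  have "{#p, \<theta> p#} \<subseteq># snd x"
    using both pairing_onD(2)[OF pairing p] by (simp add: insert_subset_eq_iff in_diff_count)
  moreover have "size (snd x) \<le> size {#p, \<theta> p#}"
    using small by (simp add: numeral_2_eq_2)
  ultimately show x: "snd x = {#p, \<theta> p#}"
    using mset_subset_size[of "{#p, \<theta> p#}" "snd x"] by fastforce
  have "point_deg {#x#} q = point_deg {#} q + (if q = p then 1 else 0) + (if q = \<theta> p then 1 else 0)" for q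
    using x by simp
  then have "balanced P \<theta> {#x#} \<longleftrightarrow> balanced P \<theta> ({#} :: ('l \<times> 'p multiset) multiset)"
    by (rule balanced_shift[OF pairing p])
  then show "balanced P \<theta> {#x#}"
    by (simp add: balanced_def)
qed

definition glue :: "'p \<Rightarrow> 'p \<Rightarrow> 'l \<times> 'p multiset \<Rightarrow> 'l \<times> 'p multiset \<Rightarrow> 'l \<times> 'p multiset" where
  "glue p p' x1 x2 = (fst x1, (snd x1 - {#p#}) + (snd x2 - {#p'#}))"

lemma point_deg_glue:
  assumes "p \<in># snd x1" "p' \<in># snd x2" "p \<noteq> p'"
  shows "point_deg (add_mset x1 (add_mset x2 M)) q
           = point_deg (add_mset (glue p p' x1 x2) M) q + (if q = p then 1 else 0) + (if q = p' then 1 else 0)"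
  using assms by (auto simp: glue_def)

lemma size_glue:
  assumes "size (snd x1) \<le> 2" "size (snd x2) \<le> 2" "p \<in># snd x1" "p' \<in># snd x2"
  shows "size (snd (glue p p' x1 x2)) \<le> 2"
proof -
  have "size (snd x1 - {#p#}) \<le> 1" "size (snd x2 - {#p'#}) \<le> 1"
    using assms by (simp_all add: size_Diff_singleton)
  then show ?thesis
    unfolding glue_def snd_conv size_union by simp
qed

text \<open>A proper nonempty balanced part of the glued multiset lifts to one of the original
  multiset: replace the glued item by x1 and x2 if it occurs.\<close>

lemma glue_lift:
  fixes R :: "('l \<times> 'p multiset) multiset"
  assumes pairing: "pairing_on P \<theta>" and p: "p \<in> P"
    and x1: "p \<in># snd x1" and x2: "\<theta> p \<in># snd x2"
    and H': "H' \<subseteq># add_mset (glue p (\<theta> p) x1 x2) R" "H' \<noteq> {#}"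
      "H' \<noteq> add_mset (glue p (\<theta> p) x1 x2) R" "balanced P \<theta> H'"
  shows "\<exists>H. H \<subseteq># add_mset x1 (add_mset x2 R) \<and> H \<noteq> {#}
           \<and> H \<noteq> add_mset x1 (add_mset x2 R) \<and> balanced P \<theta> H"
proof (cases "glue p (\<theta> p) x1 x2 \<in># H'")
  case True
  define y where "y = glue p (\<theta> p) x1 x2"
  define H where "H = add_mset x1 (add_mset x2 (H' - {#y#}))"
  have H'y: "H' = add_mset y (H' - {#y#})"
    using True by (simp add: y_def)
  have "p \<noteq> \<theta> p"
    using pairing_onD(2)[OF pairing p] by simp
  then have "point_deg H q = point_deg H' q + (if q = p then 1 else 0) + (if q = \<theta> p then 1 else 0)" for q
    unfolding H_def by (subst H'y, simp only: point_deg_glue[OF x1 x2] y_def)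
  then have "balanced P \<theta> H"
    using balanced_shift[OF pairing p] H'(4) by blast
  moreover have "H \<subseteq># add_mset x1 (add_mset x2 R)"
    using H'(1) H'y unfolding H_def y_def by (metis mset_subset_eq_add_mset_cancel)
  moreover have "H \<noteq> add_mset x1 (add_mset x2 R)"
  proof -
    have "size H' < size (add_mset y R)"
      using H'(1,3) unfolding y_def by (metis mset_subset_size subset_mset.le_neq_trans)
    moreover have "size H = Suc (size H')"
      using H'y unfolding H_def by (metis size_add_mset)
    ultimately show ?thesis
      by auto
  qed
  moreover have "H \<noteq> {#}"
    by (simp add: H_def)
  ultimately show ?thesis
    by blast
next
  case False
  then have "H' \<subseteq># R"
    using H'(1) by (simp add: inter_add_left1 subset_mset.inf.absorb_iff2)
  then have "H' \<subseteq># add_mset x1 (add_mset x2 R)"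
    by (simp add: subset_mset.order_trans[of _ R])
  moreover have "size H' < size (add_mset x1 (add_mset x2 R))"
    using size_mset_mono[OF \<open>H' \<subseteq># R\<close>] by simp
  ultimately show ?thesis
    using H'(2,4) by (metis less_irrefl)
qed

lemma glue_step:
  fixes R :: "('l \<times> 'p multiset) multiset"
  assumes pairing: "pairing_on P \<theta>" and p: "p \<in> P"
    and x1: "p \<in># snd x1" and x2: "\<theta> p \<in># snd x2"
    and small: "\<forall>x\<in>#add_mset x1 (add_mset x2 R). size (snd x) \<le> 2"
    and bal: "balanced P \<theta> (add_mset x1 (add_mset x2 R))"
  shows "\<forall>x\<in>#add_mset (glue p (\<theta> p) x1 x2) R. size (snd x) \<le> 2"
    and "balanced P \<theta> (add_mset (glue p (\<theta> p) x1 x2) R)"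
    and "q \<noteq> p \<Longrightarrow> q \<noteq> \<theta> p
           \<Longrightarrow> point_deg (add_mset (glue p (\<theta> p) x1 x2) R) q = point_deg (add_mset x1 (add_mset x2 R)) q"
proof -
  have deg: "point_deg (add_mset x1 (add_mset x2 R)) q
      = point_deg (add_mset (glue p (\<theta> p) x1 x2) R) q + (if q = p then 1 else 0) + (if q = \<theta> p then 1 else 0)" for q
    using point_deg_glue[OF x1 x2 pairing_onD(2)[OF pairing p, symmetric]] .
  show "\<forall>x\<in>#add_mset (glue p (\<theta> p) x1 x2) R. size (snd x) \<le> 2"
    using small size_glue[OF _ _ x1 x2] by auto
  show "balanced P \<theta> (add_mset (glue p (\<theta> p) x1 x2) R)"
    using balanced_shift[OF pairing p deg] bal by blast
  show "q \<noteq> p \<Longrightarrow> q \<noteq> \<theta> p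
           \<Longrightarrow> point_deg (add_mset (glue p (\<theta> p) x1 x2) R) q = point_deg (add_mset x1 (add_mset x2 R)) q"
    using deg[of q] by simp
qed

lemma sum_mset_pos_ex:
  fixes f :: "'x \<Rightarrow> nat"
  shows "(\<Sum>x\<in>#G. f x) > 0 \<Longrightarrow> \<exists>x\<in>#G. f x > 0"
  by (induct G) auto

text \<open>Two-point case, one-sided configuration: items of type (1,0) or (0,2) only; one
  (0,2)-item and two (1,0)-items form a small balanced part.\<close>

lemma one_sided_small_part:
  fixes f h :: "'x \<Rightarrow> nat"
  assumes types: "\<forall>x\<in>#G. (f x = 1 \<and> h x = 0) \<or> (f x = 0 \<and> h x = 2)"
    and sums: "(\<Sum>x\<in>#G. f x) = (\<Sum>x\<in>#G. h x)" "(\<Sum>x\<in>#G. f x) \<ge> 3"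
  shows "\<exists>H. H \<subseteq># G \<and> H \<noteq> {#} \<and> (\<Sum>x\<in>#H. f x) = (\<Sum>x\<in>#H. h x) \<and> (\<Sum>x\<in>#H. f x) \<le> 2"
proof -
  obtain y where y: "y \<in># G" "h y > 0"
    using sum_mset_pos_ex[of h G] sums by auto
  then obtain G1 where G1: "G = add_mset y G1"
    by (metis multi_member_split)
  have "f y = 0" "h y = 2"
    using types y by auto
  then have "(\<Sum>x\<in>#G1. f x) \<ge> 3"
    using sums G1 by simp
  then obtain x1 where x1: "x1 \<in># G1" "f x1 > 0"
    using sum_mset_pos_ex[of f G1] by auto
  then obtain G2 where G2: "G1 = add_mset x1 G2"
    by (metis multi_member_split)
  have "f x1 = 1" "h x1 = 0"
    using types x1 G1 by auto
  then have "(\<Sum>x\<in>#G2. f x) \<ge> 2"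
    using \<open>(\<Sum>x\<in>#G1. f x) \<ge> 3\<close> G2 by simp
  then obtain x2 where x2: "x2 \<in># G2" "f x2 > 0"
    using sum_mset_pos_ex[of f G2] by auto
  then obtain G3 where G3: "G2 = add_mset x2 G3"
    by (metis multi_member_split)
  have "f x2 = 1" "h x2 = 0"
    using types x2 G1 G2 by auto
  have "{#y, x1, x2#} \<subseteq># G"
    unfolding G1 G2 G3 by simp
  then show ?thesis
    using \<open>f y = 0\<close> \<open>h y = 2\<close> \<open>f x1 = 1\<close> \<open>h x1 = 0\<close> \<open>f x2 = 1\<close> \<open>h x2 = 0\<close>
    by (intro exI[of _ "{#y, x1, x2#}"]) simp
qed

text \<open>Two-point case: items carry f x occurrences of one point and h x of the other,
  with f x + h x <= 2.  If both totals agree and are at least 3, some nonempty part has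
  equal totals at most 2 (a single item, a pair of opposite items, or the one-sided case).\<close>

lemma small_balanced_part:
  fixes f h :: "'x \<Rightarrow> nat"
  assumes le2: "\<forall>x\<in>#G. f x + h x \<le> 2"
    and sums: "(\<Sum>x\<in>#G. f x) = (\<Sum>x\<in>#G. h x)" "(\<Sum>x\<in>#G. f x) \<ge> 3"
  shows "\<exists>H. H \<subseteq># G \<and> H \<noteq> {#} \<and> (\<Sum>x\<in>#H. f x) = (\<Sum>x\<in>#H. h x) \<and> (\<Sum>x\<in>#H. f x) \<le> 2"
proof -
  have pair: "\<exists>H. H \<subseteq># G \<and> H \<noteq> {#} \<and> (\<Sum>x\<in>#H. f x) = (\<Sum>x\<in>#H. h x) \<and> (\<Sum>x\<in>#H. f x) \<le> 2"
    if "x \<in># G" "y \<in># G" "f x = h y" "h x = f y" "f x + f y \<le> 2" "f x \<noteq> f y" for x y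
  proof -
    have "{#x, y#} \<subseteq># G"
      using that by (auto simp: insert_subset_eq_iff in_diff_count)
    then show ?thesis
      using that by (intro exI[of _ "{#x, y#}"]) auto
  qed
  show ?thesis
  proof (cases "\<exists>x\<in>#G. f x = h x")
    case True
    then obtain x where "x \<in># G" "f x = h x"
      by blast
    then show ?thesis
      using le2 by (intro exI[of _ "{#x#}"]) auto
  next
    case False
    have types: "(f x = 1 \<and> h x = 0) \<or> (f x = 0 \<and> h x = 1) \<or> (f x = 2 \<and> h x = 0) \<or> (f x = 0 \<and> h x = 2)"
      if "x \<in># G" for x
    proof -
      have "f x + h x \<le> 2" "f x \<noteq> h x"
        using le2 False that by auto
      then show ?thesis
        by arith
    qed
    show ?thesis
    proof (cases "(\<exists>x\<in>#G. f x = 1 \<and> h x = 0) \<and> (\<exists>y\<in>#G. f y = 0 \<and> h y = 1)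
                  \<or> (\<exists>x\<in>#G. f x = 2 \<and> h x = 0) \<and> (\<exists>y\<in>#G. f y = 0 \<and> h y = 2)")
      case True
      then show ?thesis
        using pair by auto
    next
      case no_pair: False
      obtain yh yf where yh: "yh \<in># G" "h yh > 0" and yf: "yf \<in># G" "f yf > 0"
        using sum_mset_pos_ex[of h G] sum_mset_pos_ex[of f G] sums by auto
      show ?thesis
      proof (cases "\<exists>y\<in>#G. f y = 0 \<and> h y = 1")
        case False
        then have "f yh = 0 \<and> h yh = 2"
          using types[OF yh(1)] yh False by auto
        then have "\<forall>x\<in>#G. (f x = 1 \<and> h x = 0) \<or> (f x = 0 \<and> h x = 2)"
          using types no_pair False yh(1) by blast
        then show ?thesis
          using one_sided_small_part sums by blast
      next
        case True
        then have "h yf = 0 \<and> f yf = 2"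
          using types[OF yf(1)] yf True no_pair by auto
        then have "\<forall>x\<in>#G. (h x = 1 \<and> f x = 0) \<or> (h x = 0 \<and> f x = 2)"
          using types no_pair True yf(1) by blast
        then show ?thesis
          using one_sided_small_part[of G h f] sums by auto
      qed
    qed
  qed
qed

lemma balanced_part_concentrated:
  fixes G :: "('l \<times> 'p multiset) multiset"
  assumes pairing: "pairing_on P \<theta>" and e: "e \<in> P"
    and small: "\<forall>x\<in>#G. size (snd x) \<le> 2" and bal: "balanced P \<theta> G"
    and e3: "point_deg G e \<ge> 3"
    and zero: "\<And>q. q \<in> P \<Longrightarrow> q \<noteq> e \<Longrightarrow> q \<noteq> \<theta> e \<Longrightarrow> point_deg G q = 0"
  shows "\<exists>H. H \<subseteq># G \<and> H \<noteq> {#} \<and> H \<noteq> G \<and> balanced P \<theta> H"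
proof -
  note te = pairing_onD[OF pairing e]
  have "\<forall>x\<in>#G. count (snd x) e + count (snd x) (\<theta> e) \<le> 2"
    using small count_two_le_size[OF te(2)[symmetric]] order.trans by blast
  moreover have "point_deg G e = point_deg G (\<theta> e)"
    using bal e unfolding balanced_def by blast
  ultimately obtain H where H: "H \<subseteq># G" "H \<noteq> {#}" "point_deg H e = point_deg H (\<theta> e)" "point_deg H e \<le> 2"
    using small_balanced_part[of G "\<lambda>x. count (snd x) e" "\<lambda>x. count (snd x) (\<theta> e)"] e3
    unfolding point_deg_def by blast
  have "point_deg H q = 0" if "q \<in> P" "q \<noteq> e" "q \<noteq> \<theta> e" for q
    using point_deg_mono[OF H(1), of q] zero[OF that] by simp
  then have "balanced P \<theta> H"
    unfolding balanced_def using H(3) te pairing_onD[OF pairing] by metis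
  moreover have "H \<noteq> G"
    using H(4) e3 by auto
  ultimately show ?thesis
    using H(1,2) by blast
qed

text \<open>If some other
  pair of points occurs, glue two items along it and use induction on the size.\<close>

lemma balanced_proper_part:
  fixes G :: "('l \<times> 'p multiset) multiset"
  assumes pairing: "pairing_on P \<theta>" and e: "e \<in> P"
  shows "\<forall>x\<in>#G. size (snd x) \<le> 2 \<Longrightarrow> balanced P \<theta> G \<Longrightarrow> point_deg G e \<ge> 3
           \<Longrightarrow> \<exists>H. H \<subseteq># G \<and> H \<noteq> {#} \<and> H \<noteq> G \<and> balanced P \<theta> H"
proof (induction "size G" arbitrary: G rule: less_induct)
  case less
  note small = less.prems(1) and bal = less.prems(2) and e3 = less.prems(3)
  show ?case
  proof (cases "\<exists>p\<in>P. p \<noteq> e \<and> p \<noteq> \<theta> e \<and> point_deg G p > 0")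
    case True
    then obtain p where p: "p \<in> P" "p \<noteq> e" "p \<noteq> \<theta> e" "point_deg G p > 0"
      by blast
    note tp = pairing_onD[OF pairing p(1)]
    have "point_deg G (\<theta> p) > 0"
      using bal p unfolding balanced_def by auto
    then obtain x2 where x2: "x2 \<in># G" "\<theta> p \<in># snd x2"
      using point_deg_pos by metis
    obtain x1 where x1: "x1 \<in># G" "p \<in># snd x1"
      using point_deg_pos[OF p(4)] by blast
    have e_not: "e \<noteq> p" "e \<noteq> \<theta> p"
      using p(2,3) tp(3) by auto
    show ?thesis
    proof (cases "\<theta> p \<in># snd x1")
      case True
      then have "snd x1 = {#p, \<theta> p#}" "balanced P \<theta> {#x1#}"
        using pair_item_balanced[OF pairing p(1) x1(2)] small x1(1) by auto
      then show ?thesis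
        using x1(1) e3 e_not by (intro exI[of _ "{#x1#}"]) auto
    next
      case False
      then have "x1 \<noteq> x2"
        using x2(2) by auto
      obtain G1 where G1: "G = add_mset x1 G1"
        using multi_member_split[OF x1(1)] by blast
      with x2(1) \<open>x1 \<noteq> x2\<close> obtain R where G: "G = add_mset x1 (add_mset x2 R)"
        using multi_member_split[of x2 G1] by auto
      note glued = glue_step[OF pairing p(1) x1(2) x2(2) small[unfolded G] bal[unfolded G], folded G]
      have "size (add_mset (glue p (\<theta> p) x1 x2) R) < size G"
        unfolding G by simp
      moreover have "point_deg (add_mset (glue p (\<theta> p) x1 x2) R) e \<ge> 3"
        using glued(3)[OF e_not] e3 by simp
      ultimately obtain H' where "H' \<subseteq># add_mset (glue p (\<theta> p) x1 x2) R" "H' \<noteq> {#}"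
        "H' \<noteq> add_mset (glue p (\<theta> p) x1 x2) R" "balanced P \<theta> H'"
        using less.hyps glued(1,2) by blast
      then show ?thesis
        unfolding G by (rule glue_lift[OF pairing p(1) x1(2) x2(2)])
    qed
  next
    case False
    then have "point_deg G q = 0" if "q \<in> P" "q \<noteq> e" "q \<noteq> \<theta> e" for q
      using that by auto
    then show ?thesis
      by (rule balanced_part_concentrated[OF pairing e small bal e3])
  qed
qed

lemma reach_from_leaf:
  assumes leaf: "{x. adj e x} = {w}" and sym: "\<And>v u. adj v u \<Longrightarrow> adj u v"
    and reach: "(e, v) \<in> {(p, q). adj p q}\<^sup>*"
  shows "v = e \<or> (w, v) \<in> {(p, q). adj p q \<and> p \<noteq> e \<and> q \<noteq> e}\<^sup>*"
  using reach
proof (induction rule: rtrancl_induct)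
  case (step y z)
  have "adj y z"
    using step(2) by simp
  consider "z = e" | "y = e" | "y \<noteq> e" "z \<noteq> e"
    by blast
  then show ?case
  proof cases
    case 2
    then show ?thesis
      using leaf \<open>adj y z\<close> by auto
  next
    case 3
    then show ?thesis
      using step(3) \<open>adj y z\<close> by (auto intro: rtrancl_into_rtrancl)
  qed simp
qed simp

lemma avoid_reach_ne:
  "(w, v) \<in> {(p, q). adj p q \<and> p \<noteq> e \<and> q \<noteq> e}\<^sup>* \<Longrightarrow> w \<noteq> e \<Longrightarrow> v \<noteq> e"
  by (induction rule: rtrancl_induct) auto

definition max_deg2_graph :: "'v set \<Rightarrow> ('v \<Rightarrow> 'v \<Rightarrow> bool) \<Rightarrow> bool" where
  "max_deg2_graph V adj \<longleftrightarrow> finite V \<and> (\<forall>v w. adj v w \<longrightarrow> v \<in> V \<and> w \<in> V)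
     \<and> (\<forall>v w. adj v w \<longrightarrow> adj w v) \<and> (\<forall>v. \<not> adj v v) \<and> (\<forall>v. card {w. adj v w} \<le> 2)"

lemma max_deg2_graph_neighbours_finite:
  "max_deg2_graph V adj \<Longrightarrow> finite {w. adj v w}"
  unfolding max_deg2_graph_def by (metis (no_types, lifting) mem_Collect_eq rev_finite_subset subsetI)

lemma max_deg2_graph_delete:
  assumes G: "max_deg2_graph V adj"
  shows "max_deg2_graph (V - {e}) (\<lambda>a b. adj a b \<and> a \<noteq> e \<and> b \<noteq> e)"
proof -
  have "card {w. adj v w \<and> v \<noteq> e \<and> w \<noteq> e} \<le> 2" for v
  proof -
    have "card {w. adj v w \<and> v \<noteq> e \<and> w \<noteq> e} \<le> card {w. adj v w}"
      using max_deg2_graph_neighbours_finite[OF G] by (intro card_mono) auto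
    also have "\<dots> \<le> 2"
      using G unfolding max_deg2_graph_def by blast
    finally show ?thesis .
  qed
  then show ?thesis
    using G unfolding max_deg2_graph_def by auto
qed

text \<open>In such a graph every vertex of degree 1 is connected to exactly one other vertex
  of degree 1 (the other end of its path).  Induction on the number of vertices, deleting
  the given leaf.\<close>

lemma unique_other_leaf:
  assumes "max_deg2_graph V adj" "card {w. adj e w} = 1"
  shows "\<exists>!e'. card {w. adj e' w} = 1 \<and> e' \<noteq> e \<and> (e, e') \<in> {(p, q). adj p q}\<^sup>*"
  using assms
proof (induction "card V" arbitrary: adj V e rule: less_induct)
  case less
  note G = less.prems(1) and leaf = less.prems(2)
  obtain w where N: "{x. adj e x} = {w}"
    using leaf card_1_singletonE by blast
  have "adj e w"
    using N by auto
  then have we: "adj e w" "adj w e" "w \<noteq> e" "e \<in> V"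
    using G unfolding max_deg2_graph_def by auto
  note finN = max_deg2_graph_neighbours_finite[OF G]
  define adj' where "adj' = (\<lambda>a b. adj a b \<and> a \<noteq> e \<and> b \<noteq> e)"
  have N': "{x. adj' v x} = {x. adj v x} - {e}" if "v \<noteq> e" for v
    using that unfolding adj'_def by auto
  have N'_same: "{x. adj' v x} = {x. adj v x}" if "v \<noteq> e" "v \<noteq> w" for v
    using N' that N G unfolding max_deg2_graph_def by blast
  have reach: "v = e \<or> (w, v) \<in> {(p, q). adj' p q}\<^sup>*" if "(e, v) \<in> {(p, q). adj p q}\<^sup>*" for v
    using reach_from_leaf[OF N _ that] G unfolding adj'_def max_deg2_graph_def by blast
  have from_w: "(e, v) \<in> {(p, q). adj p q}\<^sup>*" if "(w, v) \<in> {(p, q). adj' p q}\<^sup>*" for v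
  proof -
    have "(w, v) \<in> {(p, q). adj p q}\<^sup>*"
      using that by (rule rtrancl_mono[THEN subsetD, rotated]) (auto simp: adj'_def)
    then show ?thesis
      using we(1) by (auto intro: converse_rtrancl_into_rtrancl)
  qed
  have "card {x. adj w x} \<ge> 1"
    using we(2) finN[of w] by (metis card_0_eq empty_iff less_one mem_Collect_eq not_le)
  then consider "card {x. adj w x} = 1" | "card {x. adj w x} = 2"
    using G unfolding max_deg2_graph_def by (metis le_antisym not_less_eq_eq one_add_one plus_1_eq_Suc)
  then show ?case
  proof cases
    case 1
    have "{x. adj' w x} = {}"
      using N'[OF we(3)] 1 we(2) finN[of w] by (metis card_1_singletonE insert_Diff_single insert_absorb
        singleton_insert_inj_eq' Diff_cancel mem_Collect_eq)
    then have "v = w" if "(w, v) \<in> {(p, q). adj' p q}\<^sup>*" for v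
      using that by (auto elim: converse_rtranclE)
    then show ?thesis
      using 1 we reach by (intro ex1I[of _ w]) auto
  next
    case 2
    have "card (V - {e}) < card V"
      using G we(4) unfolding max_deg2_graph_def by (meson card_Diff1_less)
    moreover have "max_deg2_graph (V - {e}) adj'"
      unfolding adj'_def by (rule max_deg2_graph_delete[OF G])
    moreover have "card {x. adj' w x} = 1"
      using N'[OF we(3)] 2 we(2) finN[of w] by simp
    ultimately have "\<exists>!w'. card {x. adj' w' x} = 1 \<and> w' \<noteq> w \<and> (w, w') \<in> {(p, q). adj' p q}\<^sup>*"
      by (rule less.hyps)
    then obtain w' where w': "card {x. adj' w' x} = 1" "w' \<noteq> w" "(w, w') \<in> {(p, q). adj' p q}\<^sup>*"
      and w'_unique: "\<And>v. card {x. adj' v x} = 1 \<Longrightarrow> v \<noteq> w \<Longrightarrow> (w, v) \<in> {(p, q). adj' p q}\<^sup>* \<Longrightarrow> v = w'"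
      by blast
    have "w' \<noteq> e"
      using avoid_reach_ne[of w w' adj e] w'(3) we(3) unfolding adj'_def by simp
    show ?thesis
    proof (rule ex1I[of _ w'])
      show "card {x. adj w' x} = 1 \<and> w' \<noteq> e \<and> (e, w') \<in> {(p, q). adj p q}\<^sup>*"
        using w' \<open>w' \<noteq> e\<close> N'_same from_w by auto
    next
      fix v
      assume v: "card {x. adj v x} = 1 \<and> v \<noteq> e \<and> (e, v) \<in> {(p, q). adj p q}\<^sup>*"
      then have "v \<noteq> w"
        using 2 by auto
      moreover have "(w, v) \<in> {(p, q). adj' p q}\<^sup>*"
        using v reach by blast
      ultimately show "v = w'"
        using v N'_same[of v] w'_unique by simp
    qed
  qed
qed

text \<open>The setting: a colored acyclic quiver with a rank sequence satisfying the rank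
  inequalities.\<close>

locale ranked_colored_quiver =
  fixes Q0 :: "'v set" and Q1 :: "'a set" and tail head :: "'a \<Rightarrow> 'v"
    and c :: "'a \<Rightarrow> 's" and \<beta> :: "'v \<Rightarrow> nat" and r :: "'a \<Rightarrow> nat"
  assumes quiver: "colored_quiver Q0 Q1 tail head c"
    and rank: "rank_ok Q0 Q1 tail head c \<beta> r"
begin

abbreviation "R \<equiv> {(tail a, head a) | a. a \<in> Q1}"
abbreviation "X \<equiv> Xset Q0 Q1 tail head c"
abbreviation "Sg \<equiv> Sigma_pe Q0 Q1 tail head c \<beta>"
abbreviation "adj \<equiv> pe_adj Q0 Q1 tail head c \<beta> r"
abbreviation "En \<equiv> Ends Q0 Q1 tail head c \<beta> r"
abbreviation "Th \<equiv> Theta Q0 Q1 tail head c \<beta> r"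
abbreviation "U \<equiv> Usg Q0 Q1 tail head c \<beta> r"
abbreviation "ph \<equiv> phi Q0 Q1 tail head c \<beta> r"

lemma fin0: "finite Q0" and fin1: "finite Q1"
  and arrow_ends: "\<And>a. a \<in> Q1 \<Longrightarrow> tail a \<in> Q0 \<and> head a \<in> Q0"
  and acyc: "acyclic R"
  and color_paths: "\<And>s. s \<in> c ` Q1 \<Longrightarrow> \<exists>p. p \<noteq> [] \<and> set p = {a \<in> Q1. c a = s} \<and>
        (\<forall>j. Suc j < length p \<longrightarrow> head (p ! j) = tail (p ! Suc j))"
  using quiver unfolding colored_quiver_def by auto

lemma path_reach:
  assumes "set p \<subseteq> Q1" "\<forall>j. Suc j < length p \<longrightarrow> head (p ! j) = tail (p ! Suc j)"
  shows "j \<le> k \<Longrightarrow> k < length p \<Longrightarrow> (tail (p ! j), tail (p ! k)) \<in> R\<^sup>*"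
proof (induction k)
  case (Suc k)
  show ?case
  proof (cases "j = Suc k")
    case False
    then have "(tail (p ! j), tail (p ! k)) \<in> R\<^sup>*"
      using Suc by simp
    moreover have "p ! k \<in> Q1"
      using assms(1) Suc.prems by (meson Suc_lessD nth_mem subsetD)
    then have "(tail (p ! k), head (p ! k)) \<in> R"
      by blast
    moreover have "head (p ! k) = tail (p ! Suc k)"
      using assms(2) Suc.prems by blast
    ultimately show ?thesis
      by (simp add: rtrancl.rtrancl_into_rtrancl)
  qed simp
qed simp

lemma tail_ne_head: "a \<in> Q1 \<Longrightarrow> tail a \<noteq> head a"
  using acyc unfolding acyclic_def by blast

text \<open>Arrows of one color lie on an acyclic directed path, so they are determined by their
  color together with their tail, or with their head.\<close>

lemma arrow_unique:
  assumes a: "a \<in> Q1" and b: "b \<in> Q1" and same_color: "c a = c b"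
    and eq: "tail a = tail b \<or> head a = head b"
  shows "a = b"
proof (rule ccontr)
  assume "a \<noteq> b"
  obtain p where p: "set p = {x \<in> Q1. c x = c a}"
    "\<forall>j. Suc j < length p \<longrightarrow> head (p ! j) = tail (p ! Suc j)"
    using color_paths[of "c a"] a by blast
  have sp: "set p \<subseteq> Q1"
    using p by auto
  obtain ja jb where ja: "ja < length p" "p ! ja = a" and jb: "jb < length p" "p ! jb = b"
    using p(1) a b same_color by (metis (mono_tags, lifting) in_set_conv_nth mem_Collect_eq)
  have distinct_ends: "tail (p ! j) \<noteq> tail (p ! k) \<and> head (p ! j) \<noteq> head (p ! k)"
    if jk: "j < k" "k < length p" for j k
  proof -
    have "p ! j \<in> Q1" "p ! k \<in> Q1"
      using jk sp by auto
    then have arrows: "(tail (p ! j), head (p ! j)) \<in> R" "(tail (p ! k), head (p ! k)) \<in> R"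
      by blast+
    have link: "head (p ! j) = tail (p ! Suc j)"
      using p(2) jk by auto
    have mid: "(tail (p ! Suc j), tail (p ! k)) \<in> R\<^sup>*"
      using path_reach[OF sp p(2)] jk by auto
    have "(tail (p ! j), tail (p ! k)) \<in> R\<^sup>+"
      using rtrancl_into_trancl2[OF arrows(1) mid[folded link]] .
    moreover have "(head (p ! j), head (p ! k)) \<in> R\<^sup>+"
      using rtrancl_into_trancl1[OF mid[folded link] arrows(2)] .
    ultimately show ?thesis
      using acyc unfolding acyclic_def by auto
  qed
  have "ja \<noteq> jb"
    using \<open>a \<noteq> b\<close> ja jb by auto
  then show False
    using distinct_ends[of ja jb] distinct_ends[of jb ja] ja jb eq by (cases "ja < jb") auto
qed

lemma out_arr_Some: "a \<in> Q1 \<Longrightarrow> tail a = x \<Longrightarrow> c a = s \<Longrightarrow> out_arr Q1 tail c x s = Some a"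
  unfolding out_arr_def by (auto intro: arrow_unique)

lemma in_arr_Some: "a \<in> Q1 \<Longrightarrow> head a = x \<Longrightarrow> c a = s \<Longrightarrow> in_arr Q1 head c x s = Some a"
  unfolding in_arr_def by (auto intro: arrow_unique)

lemma out_arr_SomeD: "out_arr Q1 tail c x s = Some b \<Longrightarrow> b \<in> Q1 \<and> tail b = x \<and> c b = s"
  unfolding out_arr_def by (metis (mono_tags, lifting) option.distinct(1) option.inject someI_ex)

lemma in_arr_SomeD: "in_arr Q1 head c x s = Some b \<Longrightarrow> b \<in> Q1 \<and> head b = x \<and> c b = s"
  unfolding in_arr_def by (metis (mono_tags, lifting) option.distinct(1) option.inject someI_ex)

lemma arrow_in_X: "a \<in> Q1 \<Longrightarrow> (tail a, c a) \<in> X \<and> (head a, c a) \<in> X"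
  unfolding Xset_def using arrow_ends by auto

lemma rank_at: "(x, s) \<in> X \<Longrightarrow> optval r (in_arr Q1 head c x s) + optval r (out_arr Q1 tail c x s) \<le> \<beta> x"
  using rank unfolding rank_ok_def by auto

lemma rank_le_tail: "a \<in> Q1 \<Longrightarrow> r a \<le> \<beta> (tail a)"
  using rank_at[of "tail a" "c a"] arrow_in_X[of a] out_arr_Some[of a "tail a" "c a"] by (simp add: optval_def)

lemma rank_le_head: "a \<in> Q1 \<Longrightarrow> r a \<le> \<beta> (head a)"
  using rank_at[of "head a" "c a"] arrow_in_X[of a] in_arr_Some[of a "head a" "c a"] by (simp add: optval_def)

lemma rank_composable:
  "a \<in> Q1 \<Longrightarrow> b \<in> Q1 \<Longrightarrow> head a = tail b \<Longrightarrow> c a = c b \<Longrightarrow> r a + r b \<le> \<beta> (head a)"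
  using rank_at[of "head a" "c a"] arrow_in_X[of a] in_arr_Some[of a "head a" "c a"]
    out_arr_Some[of b "head a" "c a"]
  by (simp add: optval_def)

lemma adj_cases:
  assumes "adj v w"
  obtains (coupling) x s1 s2 i where "coupled Q0 Q1 tail head c x" "(x, s1) \<in> X" "(x, s2) \<in> X"
      "s1 \<noteq> s2" "1 \<le> i" "i \<le> \<beta> x - 1" "v = (x, s1, i)" "w = (x, s2, \<beta> x - i)"
  | (forward) a i where "a \<in> Q1" "1 \<le> i" "i \<le> r a - 1"
      "v = (tail a, c a, i)" "w = (head a, c a, \<beta> (head a) - i)"
  | (backward) a i where "a \<in> Q1" "1 \<le> i" "i \<le> r a - 1"
      "w = (tail a, c a, i)" "v = (head a, c a, \<beta> (head a) - i)"
  using assms unfolding pe_adj_def by blast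

lemma adj_in_Sigma: "adj v w \<Longrightarrow> v \<in> Sg \<and> w \<in> Sg"
proof (erule adj_cases)
  fix x s1 s2 i
  assume "(x, s1) \<in> X" "(x, s2) \<in> X" "1 \<le> i" "i \<le> \<beta> x - 1" "v = (x, s1, i)" "w = (x, s2, \<beta> x - i)"
  then show ?thesis
    unfolding Sigma_pe_def by auto
next
  fix a i
  assume "a \<in> Q1" "1 \<le> i" "i \<le> r a - 1"
    and "v = (tail a, c a, i)" "w = (head a, c a, \<beta> (head a) - i)"
  then show ?thesis
    using arrow_in_X rank_le_tail rank_le_head unfolding Sigma_pe_def by fastforce
next
  fix a i
  assume "a \<in> Q1" "1 \<le> i" "i \<le> r a - 1"
    and "w = (tail a, c a, i)" "v = (head a, c a, \<beta> (head a) - i)"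
  then show ?thesis
    using arrow_in_X rank_le_tail rank_le_head unfolding Sigma_pe_def by fastforce
qed

lemma adj_irrefl: "\<not> adj v v"
proof
  assume "adj v v"
  then show False
    by (rule adj_cases) (use tail_ne_head in \<open>auto; metis\<close>)+
qed

lemma adj_sym: "adj v w \<Longrightarrow> adj w v"
proof (erule adj_cases)
  fix x s1 s2 i
  assume h: "coupled Q0 Q1 tail head c x" "(x, s1) \<in> X" "(x, s2) \<in> X" "s1 \<noteq> s2" "1 \<le> i"
    "i \<le> \<beta> x - 1" "v = (x, s1, i)" "w = (x, s2, \<beta> x - i)"
  then have "1 \<le> \<beta> x - i" "\<beta> x - i \<le> \<beta> x - 1" "v = (x, s1, \<beta> x - (\<beta> x - i))"
    by auto
  then show "adj w v"
    using h unfolding pe_adj_def by blast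
qed (auto simp: pe_adj_def)

lemma Sigma_finite: "finite Sg"
proof -
  have "Sg \<subseteq> Q0 \<times> (c ` Q1) \<times> {..Max (\<beta> ` Q0)}"
  proof
    fix v
    assume "v \<in> Sg"
    then obtain x s i where v: "v = (x, s, i)" "(x, s) \<in> X" "i \<le> \<beta> x - 1"
      unfolding Sigma_pe_def by auto
    then have x: "x \<in> Q0" "s \<in> c ` Q1"
      unfolding Xset_def by auto
    then have "\<beta> x \<le> Max (\<beta> ` Q0)"
      using fin0 by simp
    then show "v \<in> Q0 \<times> (c ` Q1) \<times> {..Max (\<beta> ` Q0)}"
      using v x by auto
  qed
  then show ?thesis
    using fin0 fin1 by (meson finite_SigmaI finite_atMost finite_imageI rev_finite_subset)
qed

lemma other_color:
  assumes "coupled Q0 Q1 tail head c x" "(x, s) \<in> X" "(x, s2) \<in> X" "s2 \<noteq> s"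
  shows "s2 = (SOME s'. (x, s') \<in> X \<and> s' \<noteq> s)"
proof -
  have two: "card {s'. (x, s') \<in> X} = 2"
    using assms(1) unfolding coupled_def by simp
  then have "finite {s'. (x, s') \<in> X}"
    by (metis card.infinite zero_neq_numeral)
  moreover have "{s, s2} \<subseteq> {s'. (x, s') \<in> X}" "card {s, s2} = 2"
    using assms by auto
  ultimately have colors: "{s, s2} = {s'. (x, s') \<in> X}"
    using two by (metis card_subset_eq)
  show ?thesis
    by (rule sym, rule some_equality) (use assms colors in auto)
qed

text \<open>At a vertex x, an edge along an incoming arrow of color s and an edge along an
  outgoing arrow of color s never start at the same vertex of the graph, because
  r(i(x,s)) + r(o(x,s)) does not exceed beta x.\<close>

lemma arrow_edges_disjoint:
  assumes a: "a \<in> Q1" and i: "1 \<le> i" "i \<le> r a - 1" and b: "b \<in> Q1" "tail b = head a" "c b = c a"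
  shows "\<not> (\<beta> (head a) - i \<le> r b - 1)"
proof -
  have "r a + r b \<le> \<beta> (head a)"
    using rank_composable[OF a b(1)] b by simp
  then show ?thesis
    using i by linarith
qed

text \<open>Every vertex of the partition equivalence graph has at most two neighbours: the
  coupling partner, and the partner along the arrow of the same color.\<close>

lemma adj_degree_le_2: "card {w. adj v w} \<le> 2"
proof -
  obtain x s j where v: "v = (x, s, j)"
    by (cases v) auto
  define w_couple where "w_couple = (x, (SOME s'. (x, s') \<in> X \<and> s' \<noteq> s), \<beta> x - j)"
  define oa where "oa = (SOME a. a \<in> Q1 \<and> tail a = x \<and> c a = s)"
  define ia where "ia = (SOME a. a \<in> Q1 \<and> head a = x \<and> c a = s)"
  define w_arrow where "w_arrow = (if \<exists>a\<in>Q1. tail a = x \<and> c a = s \<and> j \<le> r a - 1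
      then (head oa, s, \<beta> (head oa) - j) else (tail ia, s, \<beta> x - j))"
  have oaI: "oa = a" if "a \<in> Q1" "tail a = x" "c a = s" for a
    unfolding oa_def by (rule some_equality) (use that arrow_unique in auto)
  have iaI: "ia = a" if "a \<in> Q1" "head a = x" "c a = s" for a
    unfolding ia_def by (rule some_equality) (use that arrow_unique in auto)
  have "{w. adj v w} \<subseteq> {w_couple, w_arrow}"
  proof
    fix w
    assume "w \<in> {w. adj v w}"
    then have "adj v w"
      by simp
    then show "w \<in> {w_couple, w_arrow}"
    proof (cases rule: adj_cases)
      case (coupling x' s1 s2 i)
      then have "x' = x" "s1 = s" "i = j"
        using v by auto
      then have "s2 = (SOME s'. (x, s') \<in> X \<and> s' \<noteq> s)"
        using other_color[of x s s2] coupling by simp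
      then show ?thesis
        using coupling \<open>x' = x\<close> \<open>i = j\<close> unfolding w_couple_def by simp
    next
      case (forward a i)
      then have a: "tail a = x" "c a = s" "i = j"
        using v by auto
      then have "\<exists>b\<in>Q1. tail b = x \<and> c b = s \<and> j \<le> r b - 1"
        using forward by blast
      then have "w_arrow = (head a, s, \<beta> (head a) - j)"
        unfolding w_arrow_def using oaI[OF forward(1) a(1,2)] by simp
      then show ?thesis
        using forward a by simp
    next
      case (backward a i)
      then have a: "head a = x" "c a = s" "j = \<beta> x - i" "r a \<le> \<beta> x"
        using v rank_le_head by auto
      have no_out: "\<not> (\<exists>b\<in>Q1. tail b = x \<and> c b = s \<and> j \<le> r b - 1)"
        using arrow_edges_disjoint[OF backward(1-3)] a by auto
      have "w_arrow = (tail a, s, \<beta> x - j)"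
        unfolding w_arrow_def if_not_P[OF no_out] using iaI[OF backward(1) a(1,2)] by simp
      moreover have "i = \<beta> x - j"
        using a backward by auto
      ultimately show ?thesis
        using backward(4) a(2) by simp
    qed
  qed
  then have "card {w. adj v w} \<le> card {w_couple, w_arrow}"
    by (rule card_mono[rotated]) simp
  also have "\<dots> \<le> 2"
    by (simp add: card_insert_le_m1)
  finally show ?thesis .
qed

lemma Ends_iff: "e \<in> En \<longleftrightarrow> card {w. adj e w} = 1"
proof
  assume "card {w. adj e w} = 1"
  then obtain w where "adj e w"
    by (metis card_1_singletonE mem_Collect_eq singletonI)
  then show "e \<in> En"
    using adj_in_Sigma \<open>card {w. adj e w} = 1\<close> unfolding Ends_def by auto
qed (auto simp: Ends_def)

text \<open>Since the graph is a disjoint union of paths and cycles, Theta is a fixed-point free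
  involution on the string endpoints.\<close>

lemma Theta_pairing: "pairing_on En Th"
proof -
  have ex1: "\<exists>!e'. e' \<in> En \<and> e' \<noteq> e \<and> pe_connected Q0 Q1 tail head c \<beta> r e e'" if "e \<in> En" for e
  proof -
    have "\<exists>!e'. card {w. adj e' w} = 1 \<and> e' \<noteq> e \<and> (e, e') \<in> {(p, q). adj p q}\<^sup>*"
    proof (rule unique_other_leaf)
      show "max_deg2_graph Sg adj"
        unfolding max_deg2_graph_def
        using Sigma_finite adj_in_Sigma adj_sym adj_irrefl adj_degree_le_2 by blast
      show "card {w. adj e w} = 1"
        using that Ends_iff by blast
    qed
    then show ?thesis
      unfolding pe_connected_def Ends_iff .
  qed
  have Th: "Th e \<in> En \<and> Th e \<noteq> e \<and> pe_connected Q0 Q1 tail head c \<beta> r e (Th e)" if "e \<in> En" for e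
    unfolding Theta_def by (rule theI'[OF ex1[OF that]])
  have "Th (Th e) = e" if "e \<in> En" for e
  proof -
    have "sym ({(p, q). adj p q}\<^sup>*)"
      by (rule sym_rtrancl) (auto simp: sym_def adj_sym)
    then have "pe_connected Q0 Q1 tail head c \<beta> r (Th e) e"
      using Th[OF that] unfolding pe_connected_def by (meson symD)
    then show ?thesis
      unfolding Theta_def[of _ _ _ _ _ _ _ "Th e"] using that Th[OF that]
      by (intro the1_equality ex1) auto
  qed
  then show ?thesis
    unfolding pairing_on_def using Th by blast
qed

text \<open>The points of an arrow a: the vertices of the partition equivalence graph at which
  u(a) contributes to phi_u.  Only those that are endpoints at coupled vertices are kept.\<close>

definition tail_point :: "'a \<Rightarrow> 'v \<times> 's \<times> nat" where
  "tail_point a = (tail a, c a, r a)"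

definition head_point :: "'a \<Rightarrow> 'v \<times> 's \<times> nat" where
  "head_point a = (head a, c a, \<beta> (head a) - r a)"

definition arrow_points :: "'a \<Rightarrow> ('v \<times> 's \<times> nat) multiset" where
  "arrow_points a =
     filter_mset (\<lambda>p. p \<in> En \<and> \<not> lonely Q0 Q1 tail head c (fst p)) {#tail_point a, head_point a#}"

definition arrow_mset :: "('a \<Rightarrow> nat) \<Rightarrow> ('a \<times> ('v \<times> 's \<times> nat) multiset) multiset" where
  "arrow_mset g = (\<Sum>a\<in>Q1. replicate_mset (g a) (a, arrow_points a))"

lemma size_arrow_points: "size (arrow_points a) \<le> 2"
  unfolding arrow_points_def by (rule order.trans[OF size_filter_mset_lesseq]) simp

lemma count_arrow_mset:
  "count (arrow_mset g) (b, m) = (if b \<in> Q1 \<and> m = arrow_points b then g b else 0)"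
proof -
  have "count (arrow_mset g) (b, m) = (\<Sum>a\<in>Q1. if a = b then (if m = arrow_points b then g b else 0) else 0)"
    unfolding arrow_mset_def count_sum by (rule sum.cong) auto
  also have "\<dots> = (if b \<in> Q1 \<and> m = arrow_points b then g b else 0)"
    using fin1 by simp
  finally show ?thesis .
qed

lemma arrow_mset_small: "\<forall>x\<in>#arrow_mset g. size (snd x) \<le> 2"
proof
  fix x
  assume x: "x \<in># arrow_mset g"
  obtain b m where x_eq: "x = (b, m)"
    by (cases x) auto
  have "0 < count (arrow_mset g) (b, m)"
    using x x_eq by simp
  then have "m = arrow_points b"
    unfolding count_arrow_mset by (simp split: if_splits)
  then show "size (snd x) \<le> 2"
    using size_arrow_points x_eq by simp
qed

lemma arrow_mset_cong: "(\<And>a. a \<in> Q1 \<Longrightarrow> g a = g' a) \<Longrightarrow> arrow_mset g = arrow_mset g'"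
  unfolding arrow_mset_def by (rule sum.cong) auto

lemma point_deg_arrow_mset: "point_deg (arrow_mset g) p = (\<Sum>a\<in>Q1. g a * count (arrow_points a) p)"
  unfolding arrow_mset_def point_deg_sum point_deg_replicate by simp

lemma sum_tail_point:
  "(\<Sum>a\<in>Q1. if tail_point a = (x, s, i) then g a else 0)
    = (if i = optval r (out_arr Q1 tail c x s) then optval g (out_arr Q1 tail c x s) else 0)"
proof (cases "out_arr Q1 tail c x s")
  case None
  then have "tail_point a \<noteq> (x, s, i)" if "a \<in> Q1" for a
    using out_arr_Some[OF that] unfolding tail_point_def by auto
  then show ?thesis
    using None by (simp add: optval_def)
next
  case (Some b)
  note b = out_arr_SomeD[OF Some]
  have "(\<Sum>a\<in>Q1. if tail_point a = (x, s, i) then g a else 0)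
      = (\<Sum>a\<in>Q1. if a = b then (if r b = i then g b else 0) else 0)"
    using arrow_unique[of _ b] b unfolding tail_point_def by (intro sum.cong) auto
  also have "\<dots> = (if r b = i then g b else 0)"
    using b fin1 by simp
  finally show ?thesis
    using Some by (auto simp: optval_def)
qed

lemma sum_head_point:
  "(\<Sum>a\<in>Q1. if head_point a = (x, s, i) then g a else 0)
    = (if i = \<beta> x - optval r (in_arr Q1 head c x s) then optval g (in_arr Q1 head c x s) else 0)"
proof (cases "in_arr Q1 head c x s")
  case None
  then have "head_point a \<noteq> (x, s, i)" if "a \<in> Q1" for a
    using in_arr_Some[OF that] unfolding head_point_def by auto
  then show ?thesis
    using None by (simp add: optval_def)
next
  case (Some b)
  note b = in_arr_SomeD[OF Some]
  have "(\<Sum>a\<in>Q1. if head_point a = (x, s, i) then g a else 0)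
      = (\<Sum>a\<in>Q1. if a = b then (if \<beta> x - r b = i then g b else 0) else 0)"
    using arrow_unique[of _ b] b unfolding head_point_def by (intro sum.cong) auto
  also have "\<dots> = (if \<beta> x - r b = i then g b else 0)"
    using b fin1 by simp
  finally show ?thesis
    using Some by (auto simp: optval_def)
qed

lemma phi_eq_point_deg:
  assumes p: "p \<in> En"
  shows "ph g p = point_deg (arrow_mset g) p"
proof -
  obtain x s i where p_eq: "p = (x, s, i)"
    by (cases p) auto
  show ?thesis
  proof (cases "lonely Q0 Q1 tail head c x")
    case True
    then have "count (arrow_points a) p = 0" for a
      unfolding arrow_points_def using p_eq by simp
    then show ?thesis
      unfolding point_deg_arrow_mset phi_def using True p_eq by simp
  next
    case False
    have "count (arrow_points a) p = (if tail_point a = p then 1 else 0) + (if head_point a = p then 1 else 0)" for a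
      unfolding arrow_points_def using p False p_eq by auto
    then have "(\<Sum>a\<in>Q1. g a * count (arrow_points a) p) =
        (\<Sum>a\<in>Q1. (if tail_point a = (x, s, i) then g a else 0) + (if head_point a = (x, s, i) then g a else 0))"
      using p_eq by (intro sum.cong) (simp_all add: distrib_left)
    also have "\<dots> = (\<Sum>a\<in>Q1. if tail_point a = (x, s, i) then g a else 0)
        + (\<Sum>a\<in>Q1. if head_point a = (x, s, i) then g a else 0)"
      by (rule sum.distrib)
    finally show ?thesis
      unfolding point_deg_arrow_mset phi_def p_eq sum_tail_point sum_head_point using False by simp
  qed
qed

lemma phi_add: "ph (\<lambda>a. f a + h a) p = ph f p + ph h p"
proof -
  have optval_add: "optval (\<lambda>a. f a + h a) b = optval f b + optval h b" for b
    by (simp add: optval_def split: option.splits)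
  obtain x s i where "p = (x, s, i)"
    by (cases p) auto
  then show ?thesis
    unfolding phi_def prod.case optval_add by simp
qed

lemma U_iff_balanced:
  assumes "\<forall>a. a \<notin> Q1 \<longrightarrow> g a = 0"
  shows "g \<in> U \<longleftrightarrow> balanced En Th (arrow_mset g)"
proof -
  have "ph g e = ph g (Th e) \<longleftrightarrow> point_deg (arrow_mset g) e = point_deg (arrow_mset g) (Th e)" if "e \<in> En" for e
    using phi_eq_point_deg[OF that] phi_eq_point_deg[OF pairing_onD(1)[OF Theta_pairing that]] by simp
  then show ?thesis
    using assms unfolding Usg_def balanced_def mem_Collect_eq by blast
qed

lemma arrow_mset_submultiset:
  assumes "H \<subseteq># arrow_mset g"
  shows "H = arrow_mset (\<lambda>a. count H (a, arrow_points a))"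
    and "count H (a, arrow_points a) \<le> g a"
proof -
  have le: "count H x \<le> count (arrow_mset g) x" for x
    using assms by (simp add: mset_subset_eq_count)
  have "count (arrow_mset g) (a, arrow_points a) \<le> g a"
    by (simp add: count_arrow_mset)
  then show "count H (a, arrow_points a) \<le> g a"
    using le order.trans by blast
  show "H = arrow_mset (\<lambda>a. count H (a, arrow_points a))"
  proof (rule multiset_eqI)
    fix x :: "'a \<times> ('v \<times> 's \<times> nat) multiset"
    obtain b m where x: "x = (b, m)"
      by (cases x) auto
    show "count H x = count (arrow_mset (\<lambda>a. count H (a, arrow_points a))) x"
      using le[of x] unfolding x count_arrow_mset by (auto split: if_splits)
  qed
qed

lemma U_diff:
  assumes u: "u \<in> U" and g: "g \<in> U" and le: "\<And>a. g a \<le> u a"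
  shows "(\<lambda>a. u a - g a) \<in> U"
proof -
  have u_split: "u = (\<lambda>a. (u a - g a) + g a)"
    using le by (simp add: fun_eq_iff)
  have "ph (\<lambda>a. u a - g a) e = ph (\<lambda>a. u a - g a) (Th e)" if "e \<in> En" for e
  proof -
    have "ph (\<lambda>a. u a - g a) e + ph g e = ph (\<lambda>a. u a - g a) (Th e) + ph g (Th e)"
      using u that unfolding Usg_def phi_add[symmetric] u_split[symmetric] by simp
    then show ?thesis
      using g that unfolding Usg_def by simp
  qed
  then show ?thesis
    using u unfolding Usg_def by simp
qed

text \<open>An element of U whose phi exceeds 2 at some endpoint has a proper nonzero
  summand in U: this is the combinatorial lemma applied to its arrow multiset.\<close>

lemma U_split:
  assumes u: "u \<in> U" and e: "e \<in> En" and big: "ph u e \<ge> 3"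
  shows "\<exists>g\<in>U. (\<forall>a. g a \<le> u a) \<and> (\<exists>a\<in>Q1. 0 < g a) \<and> (\<exists>a\<in>Q1. g a < u a)"
proof -
  have u0: "\<forall>a. a \<notin> Q1 \<longrightarrow> u a = 0"
    using u unfolding Usg_def by simp
  have "balanced En Th (arrow_mset u)"
    using u U_iff_balanced[OF u0] by simp
  moreover have "point_deg (arrow_mset u) e \<ge> 3"
    using big phi_eq_point_deg[OF e] by simp
  ultimately obtain H where H: "H \<subseteq># arrow_mset u" "H \<noteq> {#}" "H \<noteq> arrow_mset u" "balanced En Th H"
    using balanced_proper_part[OF Theta_pairing e arrow_mset_small] by blast
  define g where "g = (\<lambda>a. count H (a, arrow_points a))"
  have H_eq: "H = arrow_mset g" and le: "\<And>a. g a \<le> u a"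
    using arrow_mset_submultiset[OF H(1)] unfolding g_def by auto
  have "\<forall>a. a \<notin> Q1 \<longrightarrow> g a = 0"
    using u0 le by (metis le_zero_eq)
  then have "g \<in> U"
    using U_iff_balanced H(4) H_eq by simp
  moreover have "\<exists>a\<in>Q1. 0 < g a"
  proof -
    obtain b m where "(b, m) \<in># H"
      using H(2) by (metis multiset_nonemptyE prod.collapse)
    then have "0 < count (arrow_mset g) (b, m)"
      using H_eq by simp
    then show ?thesis
      unfolding count_arrow_mset by (auto split: if_splits)
  qed
  moreover have "\<exists>a\<in>Q1. g a < u a"
  proof (rule ccontr)
    assume "\<not> (\<exists>a\<in>Q1. g a < u a)"
    then have "arrow_mset g = arrow_mset u"
      using le by (intro arrow_mset_cong) (meson le_neq_implies_less)
    then show False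
      using H(3) H_eq by simp
  qed
  ultimately show ?thesis
    using le by blast
qed

text \<open>Splitting off summands strictly decreases the total weight, so repeated splitting
  writes every element of U as a sum of elements whose phi is at most 2 everywhere.\<close>

lemma U_generated_by_small:
  assumes "u \<in> U"
  shows "\<exists>gs. set gs \<subseteq> {g \<in> U. \<forall>e \<in> En. ph g e \<le> 2} \<and> u = (\<lambda>a. \<Sum>g\<leftarrow>gs. g a)"
  using assms
proof (induction "\<Sum>a\<in>Q1. u a" arbitrary: u rule: less_induct)
  case less
  show ?case
  proof (cases "\<forall>e\<in>En. ph u e \<le> 2")
    case True
    then show ?thesis
      using less.prems by (intro exI[of _ "[u]"]) auto
  next
    case False
    then obtain e where "e \<in> En" "ph u e \<ge> 3"
      by force
    then obtain g where g: "g \<in> U" "\<And>a. g a \<le> u a" and pos: "\<exists>a\<in>Q1. 0 < g a"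
      and proper: "\<exists>a\<in>Q1. g a < u a"
      using U_split[OF less.prems] by blast
    define u' where "u' = (\<lambda>a. u a - g a)"
    have "u' \<in> U"
      unfolding u'_def using U_diff[OF less.prems g] .
    have "(\<Sum>a\<in>Q1. g a) < (\<Sum>a\<in>Q1. u a)"
      by (rule sum_strict_mono_ex1[OF fin1]) (use g(2) proper in auto)
    then obtain gs1 where gs1: "set gs1 \<subseteq> {g \<in> U. \<forall>e \<in> En. ph g e \<le> 2}" "g = (\<lambda>a. \<Sum>g\<leftarrow>gs1. g a)"
      using less.hyps \<open>g \<in> U\<close> by blast
    have "(\<Sum>a\<in>Q1. u' a) < (\<Sum>a\<in>Q1. u a)"
    proof (rule sum_strict_mono_ex1[OF fin1])
      show "\<forall>a\<in>Q1. u' a \<le> u a"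
        unfolding u'_def by simp
      show "\<exists>a\<in>Q1. u' a < u a"
        using pos g(2) unfolding u'_def by (meson diff_less less_le_trans)
    qed
    then obtain gs2 where gs2: "set gs2 \<subseteq> {g \<in> U. \<forall>e \<in> En. ph g e \<le> 2}" "u' = (\<lambda>a. \<Sum>g\<leftarrow>gs2. g a)"
      using less.hyps \<open>u' \<in> U\<close> by blast
    have "u = (\<lambda>a. g a + u' a)"
      using g(2) unfolding u'_def by (simp add: fun_eq_iff)
    then show ?thesis
      using gs1 gs2 by (intro exI[of _ "gs1 @ gs2"]) auto
  qed
qed

end

theorem corollary9p1:
  fixes Q0 :: "'v set" and Q1 :: "'a set" and tail head :: "'a \<Rightarrow> 'v"
    and c :: "'a \<Rightarrow> 's" and \<beta> :: "'v \<Rightarrow> nat" and r :: "'a \<Rightarrow> nat"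
  assumes "gentle_colored_quiver Q0 Q1 tail head c"
    and "max_rank_seq Q0 Q1 tail head c \<beta> r"
  shows "\<forall>u \<in> Usg Q0 Q1 tail head c \<beta> r.
           \<exists>gs. set gs \<subseteq> {g \<in> Usg Q0 Q1 tail head c \<beta> r.
                    \<forall>e \<in> Ends Q0 Q1 tail head c \<beta> r. phi Q0 Q1 tail head c \<beta> r g e \<le> 2}
               \<and> u = (\<lambda>a. \<Sum>g\<leftarrow>gs. g a)"
proof -
  interpret ranked_colored_quiver Q0 Q1 tail head c \<beta> r
    using assms unfolding gentle_colored_quiver_def max_rank_seq_def by unfold_locales auto
  show ?thesis
    using U_generated_by_small by blast
qed

end
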